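(* Let $G$ be a COM and let $G'$ be an isometric subgraph of $G$ such that every antipodal subgraph of $G'$ is an antipodal subgraph of $G$. Then $G'$ is a COM.
   Context: Hypercube $Q_n$: vertex set $\{+,-\}^n$, adjacency = differing in one coordinate. A partial cube is an isometric subgraph of a hypercube. A subgraph $H$ of a graph $G$ is convex if it contains every shortest path of $G$ between vertices of $H$, and gated if for every vertex $x$ of $G$ there is $x'\in H$ such that for every $u\in H$ some shortest $x$–$u$ path passes through $x'$. A partial cube $G\subseteq Q_n$ ($n$ minimal) is antipodal if with every vertex it contains the vertex with all coordinates flipped; an antipodal subgraph of $G$ is a convex subgraph which is itself an antipodal partial cube. A COM (complex of oriented matroids, identified with its tope graph) is a partial cube all of whose antipodal subgraphs are gated. *)

theory Defs
  imports Main
begin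

text \<open>Vertices of the hypercube Q_n are encoded as subsets of {..<n}:
  a vertex x in {+,-}^n corresponds to the set of coordinates carrying +.
  A (sub)graph of Q_n is given by its vertex set; all subgraphs considered
  (isometric, convex) are induced, so the vertex set determines the graph.\<close>

definition hc_adj :: "nat set \<Rightarrow> nat set \<Rightarrow> bool" where
  "hc_adj x y \<longleftrightarrow> card ((x - y) \<union> (y - x)) = 1"

definition hypercube :: "nat \<Rightarrow> nat set set" where
  "hypercube n = Pow {..<n}"

text \<open>A walk in the induced graph on V from x to y, as the list of its vertices;
  its number of edges is length minus one.\<close>
definition walk_in :: "nat set set \<Rightarrow> nat set \<Rightarrow> nat set \<Rightarrow> nat set list \<Rightarrow> bool" where
  "walk_in V x y p \<longleftrightarrow> p \<noteq> [] \<and> hd p = x \<and> last p = y \<and> set p \<subseteq> V \<and>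
     (\<forall>i. Suc i < length p \<longrightarrow> hc_adj (p ! i) (p ! Suc i))"

definition shortest_path_in :: "nat set set \<Rightarrow> nat set \<Rightarrow> nat set \<Rightarrow> nat set list \<Rightarrow> bool" where
  "shortest_path_in V x y p \<longleftrightarrow> walk_in V x y p \<and>
     (\<forall>q. walk_in V x y q \<longrightarrow> length p \<le> length q)"

text \<open>H is an isometric subgraph of G: d_H(x,y) = d_G(x,y) for all x, y in H
  (d_H \<ge> d_G is automatic since H \<subseteq> G).\<close>
definition isometric_subgraph :: "nat set set \<Rightarrow> nat set set \<Rightarrow> bool" where
  "isometric_subgraph H G \<longleftrightarrow> H \<noteq> {} \<and> H \<subseteq> G \<and>
     (\<forall>x\<in>H. \<forall>y\<in>H. \<forall>p. walk_in G x y p \<longrightarrow> (\<exists>q. walk_in H x y q \<and> length q \<le> length p))"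

definition partial_cube :: "nat \<Rightarrow> nat set set \<Rightarrow> bool" where
  "partial_cube n G \<longleftrightarrow> isometric_subgraph G (hypercube n)"

definition convex_in :: "nat set set \<Rightarrow> nat set set \<Rightarrow> bool" where
  "convex_in H G \<longleftrightarrow> H \<subseteq> G \<and>
     (\<forall>u\<in>H. \<forall>v\<in>H. \<forall>p. shortest_path_in G u v p \<longrightarrow> set p \<subseteq> H)"

definition gated_in :: "nat set set \<Rightarrow> nat set set \<Rightarrow> bool" where
  "gated_in H G \<longleftrightarrow> H \<subseteq> G \<and>
     (\<forall>x\<in>G. \<exists>x'\<in>H. \<forall>u\<in>H. \<exists>p. shortest_path_in G x u p \<and> x' \<in> set p)"

text \<open>For an isometric subgraph of Q_n,
  dropping the constant coordinates gives an isometric embedding into a hypercube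
  of minimal dimension; flipping all coordinates there means flipping exactly these.\<close>
definition nonconst_coords :: "nat set set \<Rightarrow> nat set" where
  "nonconst_coords H = {i. \<exists>a\<in>H. \<exists>b\<in>H. i \<in> a \<and> i \<notin> b}"

definition antipode :: "nat set set \<Rightarrow> nat set \<Rightarrow> nat set" where
  "antipode H x = (x - nonconst_coords H) \<union> (nonconst_coords H - x)"

definition antipodal_partial_cube :: "nat \<Rightarrow> nat set set \<Rightarrow> bool" where
  "antipodal_partial_cube n H \<longleftrightarrow> partial_cube n H \<and> (\<forall>x\<in>H. antipode H x \<in> H)"

definition antipodal_subgraph :: "nat \<Rightarrow> nat set set \<Rightarrow> nat set set \<Rightarrow> bool" where
  "antipodal_subgraph n G H \<longleftrightarrow> convex_in H G \<and> antipodal_partial_cube n H"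

definition is_COM :: "nat \<Rightarrow> nat set set \<Rightarrow> bool" where
  "is_COM n G \<longleftrightarrow> partial_cube n G \<and> (\<forall>H. antipodal_subgraph n G H \<longrightarrow> gated_in H G)"

end

theory Submission
  imports Defs
begin

text \<open>Being an isometric subgraph is transitive, so G' is again a partial cube.
  By hypothesis every antipodal subgraph H of G' is gated in G. A gate v in G of
  x \<in> G' lies on a shortest G-path from x to any u \<in> H; splitting that path at v
  and replacing both halves by G'-paths that are no longer (G' is isometric in G)
  gives a path of G' through v that is shortest already in G, hence in G'.
  So v is a gate of x in G' as well.\<close>

lemma walk_in_Cons_Cons:
  "walk_in V x y (a # b # p) \<longleftrightarrow> a = x \<and> a \<in> V \<and> hc_adj a b \<and> walk_in V b y (b # p)"
  unfolding walk_in_def by (auto simp: nth_Cons split: nat.split)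

lemma walk_in_singleton: "walk_in V x y [a] \<longleftrightarrow> a = x \<and> a = y \<and> a \<in> V"
  unfolding walk_in_def by auto

lemma walk_in_hd_tl: "walk_in V x y p \<Longrightarrow> p = x # tl p"
  unfolding walk_in_def by (cases p) auto

lemma walk_in_ConsD: "walk_in V x y (a # p) \<Longrightarrow> a = x \<and> a \<in> V"
  unfolding walk_in_def by auto

lemma walk_in_mono: "walk_in V x y p \<Longrightarrow> V \<subseteq> W \<Longrightarrow> walk_in W x y p"
  unfolding walk_in_def by auto

lemma walk_in_append:
  "walk_in V x y p \<Longrightarrow> walk_in V y z q \<Longrightarrow> walk_in V x z (p @ tl q)"
proof (induction p arbitrary: x rule: induct_list012)
  case 1
  then show ?case by (simp add: walk_in_def)
next
  case (2 a)
  then show ?case by (metis walk_in_singleton walk_in_hd_tl append_Cons append_Nil)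
next
  case (3 a b p)
  then show ?case by (auto simp: walk_in_Cons_Cons)
qed

lemma walk_in_split:
  "walk_in V x y (ps @ v # qs) \<Longrightarrow> walk_in V x v (ps @ [v]) \<and> walk_in V v y (v # qs)"
proof (induction ps arbitrary: x rule: induct_list012)
  case 1
  then show ?case by (auto simp: walk_in_singleton dest: walk_in_ConsD)
next
  case (2 a)
  then show ?case by (auto simp: walk_in_Cons_Cons walk_in_singleton dest: walk_in_ConsD)
next
  case (3 a b ps)
  then show ?case by (auto simp: walk_in_Cons_Cons)
qed

lemma isometric_subgraph_trans:
  assumes "isometric_subgraph H G" "isometric_subgraph G K"
  shows "isometric_subgraph H K"
  unfolding isometric_subgraph_def
proof (intro conjI ballI allI impI)
  show "H \<noteq> {}" "H \<subseteq> K" using assms unfolding isometric_subgraph_def by auto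
next
  fix x y p assume "x \<in> H" "y \<in> H" "walk_in K x y p"
  moreover have "H \<subseteq> G" using assms(1) unfolding isometric_subgraph_def by blast
  ultimately obtain q where "walk_in G x y q" "length q \<le> length p"
    using assms(2) unfolding isometric_subgraph_def by blast
  with \<open>x \<in> H\<close> \<open>y \<in> H\<close> obtain r where "walk_in H x y r" "length r \<le> length q"
    using assms(1) unfolding isometric_subgraph_def by blast
  with \<open>length q \<le> length p\<close> show "\<exists>r. walk_in H x y r \<and> length r \<le> length p"
    by auto
qed

lemma partial_cube_isometric_subgraph:
  "partial_cube n G \<Longrightarrow> isometric_subgraph G' G \<Longrightarrow> partial_cube n G'"
  unfolding partial_cube_def using isometric_subgraph_trans by blast

lemma shortest_path_in_subset:
  assumes "shortest_path_in G x y p" "G' \<subseteq> G" "walk_in G' x y q" "length q \<le> length p"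
  shows "shortest_path_in G' x y q"
  using assms walk_in_mono unfolding shortest_path_in_def by (meson order_trans)

lemma shortest_path_in_isometric_subgraph:
  assumes iso: "isometric_subgraph G' G" and p: "shortest_path_in G x y p"
    and "x \<in> G'" "y \<in> G'" "v \<in> set p" "v \<in> G'"
  shows "\<exists>q. shortest_path_in G' x y q \<and> v \<in> set q"
proof -
  obtain ps qs where "p = ps @ v # qs" using \<open>v \<in> set p\<close> by (meson split_list)
  with p have p1: "walk_in G x v (ps @ [v])" and p2: "walk_in G v y (v # qs)"
    using walk_in_split unfolding shortest_path_in_def by blast+
  have isoD: "\<exists>q. walk_in G' a b q \<and> length q \<le> length r"
    if "a \<in> G'" "b \<in> G'" "walk_in G a b r" for a b r
    using iso that unfolding isometric_subgraph_def by blast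
  obtain q1 where q1: "walk_in G' x v q1" "length q1 \<le> length (ps @ [v])"
    using isoD[OF \<open>x \<in> G'\<close> \<open>v \<in> G'\<close> p1] by blast
  obtain q2 where q2: "walk_in G' v y q2" "length q2 \<le> length (v # qs)"
    using isoD[OF \<open>v \<in> G'\<close> \<open>y \<in> G'\<close> p2] by blast
  have "q2 \<noteq> []" using q2(1) unfolding walk_in_def by blast
  then have "length (q1 @ tl q2) \<le> length p"
    using q1(2) q2(2) \<open>p = ps @ v # qs\<close> by simp
  moreover have "walk_in G' x y (q1 @ tl q2)" using q1(1) q2(1) by (rule walk_in_append)
  moreover have "v \<in> set q1" using q1(1) unfolding walk_in_def by auto
  moreover have "G' \<subseteq> G" using iso unfolding isometric_subgraph_def by blast
  ultimately have "shortest_path_in G' x y (q1 @ tl q2) \<and> v \<in> set (q1 @ tl q2)"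
    using p shortest_path_in_subset by auto
  then show ?thesis by blast
qed

lemma gated_in_isometric_subgraph:
  assumes "gated_in H G" "isometric_subgraph G' G" "H \<subseteq> G'"
  shows "gated_in H G'"
  unfolding gated_in_def
proof (intro conjI ballI)
  fix x assume "x \<in> G'"
  then have "x \<in> G" using assms(2) unfolding isometric_subgraph_def by blast
  then obtain v where "v \<in> H" and gate: "\<forall>u\<in>H. \<exists>p. shortest_path_in G x u p \<and> v \<in> set p"
    using assms(1) unfolding gated_in_def by blast
  have "\<exists>q. shortest_path_in G' x u q \<and> v \<in> set q" if "u \<in> H" for u
    using gate \<open>u \<in> H\<close> \<open>v \<in> H\<close> \<open>x \<in> G'\<close> assms(2,3)
      shortest_path_in_isometric_subgraph by blast
  with \<open>v \<in> H\<close> show "\<exists>v\<in>H. \<forall>u\<in>H. \<exists>q. shortest_path_in G' x u q \<and> v \<in> set q"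
    by blast
qed (fact assms(3))

theorem mainTheorem5:
  fixes n :: nat and G G' :: "nat set set"
  assumes "is_COM n G"
    and "isometric_subgraph G' G"
    and "\<forall>H. antipodal_subgraph n G' H \<longrightarrow> antipodal_subgraph n G H"
  shows "is_COM n G'"
  unfolding is_COM_def
proof (intro conjI allI impI)
  show "partial_cube n G'"
    using assms(1,2) partial_cube_isometric_subgraph unfolding is_COM_def by blast
next
  fix H assume H: "antipodal_subgraph n G' H"
  then have "gated_in H G" using assms(1,3) unfolding is_COM_def by blast
  moreover have "H \<subseteq> G'" using H unfolding antipodal_subgraph_def convex_in_def by blast
  ultimately show "gated_in H G'" using assms(2) gated_in_isometric_subgraph by blast
qed

end
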